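(* Let $G=(V,E,\mathcal{P},s,t,c)$ be an update flow network with exactly two update flow pairs $\mathcal{P}=\{B,R\}$, $B=(B^o,B^u)$ of demand $d_B$ and $R=(R^o,R^u)$ of demand $d_R$, such that $B^o\cup B^u$ and $R^o\cup R^u$ are acyclic. If the dependency graph $D$ of $G$ contains a directed cycle, then there is no feasible update sequence for $G$.
   Context: A flow network is $G=(V,E,s,t,c)$ where $(V,E)$ is a directed graph, $s,t\in V$, and $c\colon E\to\mathbb{N}$ is a capacity function. An $(s,t)$-flow of demand $d\in\mathbb{N}$ is a directed path $F$ from $s$ to $t$ with $d\le c(e)$ for all $e\in E(F)$. An update flow pair $P=(F^o,F^u)$ consists of two $(s,t)$-flows, the old flow $F^o$ and the new flow $F^u$, both of the same demand $d_P$. An update flow network $G=(V,E,\mathcal{P},s,t,c)$ is a flow network together with a finite family $\mathcal{P}$ of update flow pairs whose old flows are jointly valid: $\sum_{P\in\mathcal{P}:\,e\in E(F^o_P)} d_P\le c(e)$ for every $e\in E$. An update is an element $(v,P)\in V\times\mathcal{P}$. For a set $U\subseteq V\times\mathcal{P}$ of updates and a pair $P=(F^o,F^u)$, an edge $(u,v)\in E(F^o)\cup E(F^u)$ is active for $P$ with respect to $U$ if either $(u,P)\notin U$ and $(u,v)\in E(F^o)$, or $(u,P)\in U$ and $(u,v)\in E(F^u)$; otherwise it is inactive. $P$ is transient for $U$ if the graph formed by the edges active for $P$ w.r.t. $U$ contains exactly one directed $s$–$t$ path $T_{P,U}$. The family $\mathcal{P}$ is a transient family for $U$ if every $P\in\mathcal{P}$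 is transient for $U$ and $\sum_{P\in\mathcal{P}:\,e\in E(T_{P,U})} d_P\le c(e)$ for every edge $e$. An update sequence is an ordered partition $\mathfrak{R}=(\mathfrak{r}_1,\dots,\mathfrak{r}_\ell)$ of $V\times\mathcal{P}$ into rounds; it is feasible if for every $i$ and every $S\subseteq\mathfrak{r}_i$, $\mathcal{P}$ is a transient family for $S\cup\mathfrak{r}_1\cup\dots\cup\mathfrak{r}_{i-1}$. Blocks: for a pair $P=(F^o,F^u)$ with $F^o\cup F^u$ acyclic, fix a topological order $\prec$ of $F^o\cup F^u$ and let $z_1\prec\dots\prec z_k$ be the vertices of $V(F^o)\cap V(F^u)$. For $j\in\{1,\dots,k-1\}$, the $j$-th block of $P$ (an $P$-block) is the subgraph of $F^o\cup F^u$ induced by $\{v: z_j\preceq v\preceq z_{j+1}\}$. Dependency graph: for $I,J\in\{B,R\}$ with $I\ne J$, an $I$-block $b_1$ depends on a $J$-block $b_2$ if there is an edge $e\in E(b_1)\cap E(I^u)\cap E(b_2)\cap E(J^o)$ with $c(e)<d_I+d_J$. The dependency graph $D$ of $G$ is the directed graph whose vertices are all blocks of $B$ and of $R$, with an arc from $b_1$ to $b_2$ whenever $b_1$ depends on $b_2$. *)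

theory Defs
  imports Main
begin

text \<open>The two update flow pairs B and R are indexed by the datatype pid.
  Vertices have type 'v, edges are pairs, flows are (simple) vertex lists.\<close>

datatype pid = PB | PR

definition pedges :: "'v list \<Rightarrow> ('v \<times> 'v) set" where
  "pedges xs = set (zip xs (tl xs))"

definition is_st_path :: "('v \<times> 'v) set \<Rightarrow> 'v \<Rightarrow> 'v \<Rightarrow> 'v list \<Rightarrow> bool" where
  "is_st_path E s t xs \<longleftrightarrow> xs \<noteq> [] \<and> distinct xs \<and> hd xs = s \<and> last xs = t \<and> pedges xs \<subseteq> E"

definition is_flow :: "'v set \<Rightarrow> ('v \<times> 'v) set \<Rightarrow> 'v \<Rightarrow> 'v \<Rightarrow> ('v \<times> 'v \<Rightarrow> nat) \<Rightarrow> nat \<Rightarrow> 'v list \<Rightarrow> bool" where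
  "is_flow V E s t c d F \<longleftrightarrow> is_st_path E s t F \<and> set F \<subseteq> V \<and> (\<forall>e\<in>pedges F. d \<le> c e)"

definition update_flow_network ::
  "'v set \<Rightarrow> ('v \<times> 'v) set \<Rightarrow> 'v \<Rightarrow> 'v \<Rightarrow> ('v \<times> 'v \<Rightarrow> nat) \<Rightarrow> (pid \<Rightarrow> 'v list) \<Rightarrow> (pid \<Rightarrow> 'v list) \<Rightarrow> (pid \<Rightarrow> nat) \<Rightarrow> bool" where
  "update_flow_network V E s t c Fo Fu d \<longleftrightarrow>
     finite V \<and> E \<subseteq> V \<times> V \<and> s \<in> V \<and> t \<in> V \<and>
     (\<forall>P. is_flow V E s t c (d P) (Fo P) \<and> is_flow V E s t c (d P) (Fu P)) \<and>
     (\<forall>e\<in>E. (\<Sum>P\<in>{PB, PR}. if e \<in> pedges (Fo P) then d P else 0) \<le> c e)"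

definition active_edges ::
  "(pid \<Rightarrow> 'v list) \<Rightarrow> (pid \<Rightarrow> 'v list) \<Rightarrow> ('v \<times> pid) set \<Rightarrow> pid \<Rightarrow> ('v \<times> 'v) set" where
  "active_edges Fo Fu U P =
     {(u, v). ((u, P) \<notin> U \<and> (u, v) \<in> pedges (Fo P)) \<or> ((u, P) \<in> U \<and> (u, v) \<in> pedges (Fu P))}"

definition transient ::
  "'v \<Rightarrow> 'v \<Rightarrow> (pid \<Rightarrow> 'v list) \<Rightarrow> (pid \<Rightarrow> 'v list) \<Rightarrow> ('v \<times> pid) set \<Rightarrow> pid \<Rightarrow> bool" where
  "transient s t Fo Fu U P \<longleftrightarrow> (\<exists>!xs. is_st_path (active_edges Fo Fu U P) s t xs)"

definition trans_path ::
  "'v \<Rightarrow> 'v \<Rightarrow> (pid \<Rightarrow> 'v list) \<Rightarrow> (pid \<Rightarrow> 'v list) \<Rightarrow> ('v \<times> pid) set \<Rightarrow> pid \<Rightarrow> 'v list" where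
  "trans_path s t Fo Fu U P = (THE xs. is_st_path (active_edges Fo Fu U P) s t xs)"

definition transient_family ::
  "('v \<times> 'v) set \<Rightarrow> 'v \<Rightarrow> 'v \<Rightarrow> ('v \<times> 'v \<Rightarrow> nat) \<Rightarrow> (pid \<Rightarrow> 'v list) \<Rightarrow> (pid \<Rightarrow> 'v list) \<Rightarrow> (pid \<Rightarrow> nat) \<Rightarrow> ('v \<times> pid) set \<Rightarrow> bool" where
  "transient_family E s t c Fo Fu d U \<longleftrightarrow>
     (\<forall>P. transient s t Fo Fu U P) \<and>
     (\<forall>e\<in>E. (\<Sum>P\<in>{PB, PR}. if e \<in> pedges (trans_path s t Fo Fu U P) then d P else 0) \<le> c e)"

definition update_sequence :: "'v set \<Rightarrow> ('v \<times> pid) set list \<Rightarrow> bool" where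
  "update_sequence V rs \<longleftrightarrow>
     (\<forall>r\<in>set rs. r \<noteq> {}) \<and>
     (\<forall>i<length rs. \<forall>j<length rs. i \<noteq> j \<longrightarrow> rs ! i \<inter> rs ! j = {}) \<and>
     \<Union>(set rs) = V \<times> UNIV"

definition feasible_update_sequence ::
  "'v set \<Rightarrow> ('v \<times> 'v) set \<Rightarrow> 'v \<Rightarrow> 'v \<Rightarrow> ('v \<times> 'v \<Rightarrow> nat) \<Rightarrow> (pid \<Rightarrow> 'v list) \<Rightarrow> (pid \<Rightarrow> 'v list) \<Rightarrow> (pid \<Rightarrow> nat) \<Rightarrow> ('v \<times> pid) set list \<Rightarrow> bool" where
  "feasible_update_sequence V E s t c Fo Fu d rs \<longleftrightarrow>
     update_sequence V rs \<and>
     (\<forall>i<length rs. \<forall>S\<subseteq>rs ! i. transient_family E s t c Fo Fu d (S \<union> \<Union>(set (take i rs))))"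

text \<open>Position of v in the list L (length L if absent).\<close>
definition pos :: "'v list \<Rightarrow> 'v \<Rightarrow> nat" where
  "pos L v = length (takeWhile (\<lambda>x. x \<noteq> v) L)"

definition topo_order :: "('v \<times> 'v) set \<Rightarrow> 'v set \<Rightarrow> 'v list \<Rightarrow> bool" where
  "topo_order Es Vs L \<longleftrightarrow> distinct L \<and> set L = Vs \<and>
     (\<forall>(u, v)\<in>Es. pos L u < pos L v)"

text \<open>Common vertices z_1, ..., z_k of F^o and F^u in topological order.\<close>
definition common_vs :: "'v list \<Rightarrow> 'v list \<Rightarrow> 'v list \<Rightarrow> 'v list" where
  "common_vs Fo Fu L = filter (\<lambda>v. v \<in> set Fo \<and> v \<in> set Fu) L"

definition num_blocks :: "(pid \<Rightarrow> 'v list) \<Rightarrow> (pid \<Rightarrow> 'v list) \<Rightarrow> (pid \<Rightarrow> 'v list) \<Rightarrow> pid \<Rightarrow> nat" where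
  "num_blocks Fo Fu L P = length (common_vs (Fo P) (Fu P) (L P)) - 1"

text \<open>Vertices of the block j (0-based, i.e. the (j+1)-th block) of pair P:
  all v with z_(j+1) \<preceq> v \<preceq> z_(j+2).\<close>
definition block_vertices :: "(pid \<Rightarrow> 'v list) \<Rightarrow> (pid \<Rightarrow> 'v list) \<Rightarrow> (pid \<Rightarrow> 'v list) \<Rightarrow> pid \<Rightarrow> nat \<Rightarrow> 'v set" where
  "block_vertices Fo Fu L P j =
     (let zs = common_vs (Fo P) (Fu P) (L P) in
      {v \<in> set (L P). pos (L P) (zs ! j) \<le> pos (L P) v \<and>
                      pos (L P) v \<le> pos (L P) (zs ! Suc j)})"

definition block_edges :: "(pid \<Rightarrow> 'v list) \<Rightarrow> (pid \<Rightarrow> 'v list) \<Rightarrow> (pid \<Rightarrow> 'v list) \<Rightarrow> pid \<Rightarrow> nat \<Rightarrow> ('v \<times> 'v) set" where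
  "block_edges Fo Fu L P j =
     {(u, v) \<in> pedges (Fo P) \<union> pedges (Fu P).
        u \<in> block_vertices Fo Fu L P j \<and> v \<in> block_vertices Fo Fu L P j}"

definition dep_graph ::
  "('v \<times> 'v \<Rightarrow> nat) \<Rightarrow> (pid \<Rightarrow> 'v list) \<Rightarrow> (pid \<Rightarrow> 'v list) \<Rightarrow> (pid \<Rightarrow> nat) \<Rightarrow> (pid \<Rightarrow> 'v list) \<Rightarrow> ((pid \<times> nat) \<times> (pid \<times> nat)) set" where
  "dep_graph c Fo Fu d L =
     {((I, j), (J, j')). I \<noteq> J \<and> j < num_blocks Fo Fu L I \<and> j' < num_blocks Fo Fu L J \<and>
        (\<exists>e. e \<in> block_edges Fo Fu L I j \<and> e \<in> pedges (Fu I) \<and>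
             e \<in> block_edges Fo Fu L J j' \<and> e \<in> pedges (Fo J) \<and> c e < d I + d J)}"

end

theory Submission
  imports Defs
begin

text \<open>Fix a feasible update sequence and compare the rounds in which the first vertices of
  blocks are updated. Suppose an I-block b1 depends on a J-block b2 through an edge e, and the
  update at the first vertex of b1 happens no later than the one at the first vertex of b2.
  Right after the former is applied, the transient path of I switches at that vertex to the new
  flow; the inner vertices of a block lie on only one of the two flows, so the path is forced
  along the new flow through the whole block, hence through e. The transient path of J, not yet
  switched at the first vertex of b2, likewise runs through e along the old flow. Since
  c(e) < d_I + d_J, capacity is violated. Hence rounds strictly decrease along the arcs of the
  dependency graph, which is therefore acyclic.\<close>

lemma pos_Cons [simp]: "pos (x # xs) v = (if x = v then 0 else Suc (pos xs v))"
  by (simp add: pos_def)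

lemma nth_pos: "v \<in> set L \<Longrightarrow> L ! pos L v = v"
  by (induction L) auto

lemma pos_nth: "distinct L \<Longrightarrow> i < length L \<Longrightarrow> pos L (L ! i) = i"
  by (induction L arbitrary: i) (auto simp: nth_Cons split: nat.splits)

lemma inj_on_pos: "inj_on (pos L) (set L)"
  by (metis inj_onI nth_pos)

lemma sorted_wrt_pos: "distinct L \<Longrightarrow> sorted_wrt (\<lambda>x y. pos L x < pos L y) L"
  by (simp add: sorted_wrt_iff_nth_less pos_nth)

lemma pedges_Cons_Cons [simp]: "pedges (x # y # zs) = insert (x, y) (pedges (y # zs))"
  by (simp add: pedges_def)

lemma pedges_iff_nth:
  "(x, y) \<in> pedges xs \<longleftrightarrow> (\<exists>i. Suc i < length xs \<and> xs ! i = x \<and> xs ! Suc i = y)"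
  by (auto simp: pedges_def in_set_zip nth_tl) (metis Suc_lessD less_diff_conv add_Suc_right add_0_right)

lemma pedges_subset: "pedges xs \<subseteq> set xs \<times> set xs"
  by (cases xs) (auto simp: pedges_def dest: set_zip_leftD set_zip_rightD)

lemma pedges_from_nth:
  assumes "distinct xs" "k < length xs" "(xs ! k, y) \<in> pedges xs"
  shows "Suc k < length xs \<and> y = xs ! Suc k"
  using assms by (auto simp: pedges_iff_nth nth_eq_iff_index_eq)

lemma pedges_from_non_last:
  assumes "x \<in> set xs" "x \<noteq> last xs"
  shows "\<exists>y. (x, y) \<in> pedges xs"
proof -
  obtain i where i: "i < length xs" "xs ! i = x"
    using assms(1) by (metis in_set_conv_nth)
  with assms(2) have "Suc i < length xs"
    by (metis Suc_lessI last_conv_nth list.size(3) not_less0 diff_Suc_1)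
  with i show ?thesis
    by (auto simp: pedges_iff_nth)
qed

lemma is_st_path_mono: "A \<subseteq> B \<Longrightarrow> is_st_path A s t xs \<Longrightarrow> is_st_path B s t xs"
  by (auto simp: is_st_path_def)

lemma sorted_wrt_if_increasing_on_pedges:
  assumes "\<forall>(u, v) \<in> pedges xs. f u < f v"
  shows "sorted_wrt (\<lambda>x y. f x < (f y :: 'a :: linorder)) xs"
proof -
  have "transp (\<lambda>x y. f x < f y)"
    by (auto intro: transpI)
  then show ?thesis
    using assms by (fastforce simp: sorted_wrt_iff_nth_Suc_transp pedges_iff_nth)
qed

lemma sorted_wrt_nth_less_iff:
  fixes f :: "'v \<Rightarrow> 'a :: linorder"
  assumes "sorted_wrt (\<lambda>x y. f x < f y) xs" "i < length xs" "j < length xs"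
  shows "f (xs ! i) < f (xs ! j) \<longleftrightarrow> i < j"
  using assms sorted_wrt_nth_less[OF assms(1)]
  by (metis less_asym' linorder_neqE_nat)

lemma sorted_wrt_nth_le_iff:
  fixes f :: "'v \<Rightarrow> 'a :: linorder"
  assumes "sorted_wrt (\<lambda>x y. f x < f y) xs" "i < length xs" "j < length xs"
  shows "f (xs ! i) \<le> f (xs ! j) \<longleftrightarrow> i \<le> j"
  using sorted_wrt_nth_less_iff[OF assms(1,3,2)] by (simp add: not_less[symmetric])

lemma pedges_no_jump_over:
  fixes f :: "'v \<Rightarrow> 'a :: linorder"
  assumes "\<forall>(u, v) \<in> pedges xs. f u < f v" "z \<in> set xs" "(x, y) \<in> pedges xs" "f x < f z"
  shows "f y \<le> f z"
proof -
  note sorted = sorted_wrt_if_increasing_on_pedges[OF assms(1)]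
  obtain i where i: "Suc i < length xs" "xs ! i = x" "xs ! Suc i = y"
    using assms(3) by (auto simp: pedges_iff_nth)
  obtain k where k: "k < length xs" "xs ! k = z"
    using assms(2) by (metis in_set_conv_nth)
  have "i < k"
    using assms(4) i k sorted_wrt_nth_less_iff[OF sorted, of i k] by simp
  then show ?thesis
    using i k sorted_wrt_nth_le_iff[OF sorted, of "Suc i" k] by simp
qed

lemma path_attains_level:
  fixes f :: "'v \<Rightarrow> 'a :: linorder"
  assumes "xs \<noteq> []" "f (hd xs) \<le> p" "p \<le> f (last xs)"
    and "\<forall>(x, y) \<in> pedges xs. f x < p \<longrightarrow> f y \<le> p"
  shows "\<exists>x \<in> set xs. f x = p"
  using assms
proof (induction xs)
  case (Cons x ys)
  show ?case
  proof (cases "f x = p")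
    case False
    with Cons.prems have "f x < p" "ys \<noteq> []"
      by auto
    with Cons.prems show ?thesis
      using Cons.IH by (cases ys) auto
  qed simp
qed simp

lemma path_follows_segment:
  assumes "distinct xs" "b < length xs" "xs ! a \<in> set T"
    and "\<And>n. a \<le> n \<Longrightarrow> n < b \<Longrightarrow> xs ! n \<noteq> last T"
    and "\<And>n w. a \<le> n \<Longrightarrow> n < b \<Longrightarrow> (xs ! n, w) \<in> pedges T \<Longrightarrow> (xs ! n, w) \<in> pedges xs"
    and "a \<le> n" "n < b"
  shows "(xs ! n, xs ! Suc n) \<in> pedges T"
proof -
  have step: "(xs ! n, xs ! Suc n) \<in> pedges T"
    if n: "a \<le> n" "n < b" "xs ! n \<in> set T" for n
  proof -
    obtain w where w: "(xs ! n, w) \<in> pedges T"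
      using pedges_from_non_last assms(4) n by metis
    then have "w = xs ! Suc n"
      using assms(1,2,5) pedges_from_nth n by (metis order.strict_trans)
    with w show ?thesis
      by simp
  qed
  have "xs ! n \<in> set T" if "a \<le> n" "n \<le> b" for n
    using that
  proof (induction n rule: nat_induct_at_least)
    case (Suc n)
    then show ?case
      using step pedges_subset by fastforce
  qed (use assms(3) in simp)
  with step assms(6,7) show ?thesis
    by simp
qed

lemma pos_filter_consecutive:
  assumes "distinct L" "Suc j < length (filter Q L)"
  shows "pos L (filter Q L ! j) < pos L (filter Q L ! Suc j)"
    and "x \<in> set L \<Longrightarrow> Q x \<Longrightarrow>
           \<not> (pos L (filter Q L ! j) < pos L x \<and> pos L x < pos L (filter Q L ! Suc j))"
proof -
  have sorted: "sorted_wrt (\<lambda>x y. pos L x < pos L y) (filter Q L)"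
    using assms(1) by (intro sorted_wrt_filter sorted_wrt_pos)
  then show "pos L (filter Q L ! j) < pos L (filter Q L ! Suc j)"
    using assms(2) sorted_wrt_nth_less[OF sorted, of j "Suc j"] by simp
  assume "x \<in> set L" "Q x"
  then obtain q where "q < length (filter Q L)" "filter Q L ! q = x"
    by (metis mem_Collect_eq set_filter in_set_conv_nth)
  then show "\<not> (pos L (filter Q L ! j) < pos L x \<and> pos L x < pos L (filter Q L ! Suc j))"
    using sorted_wrt_nth_less_iff[OF sorted] assms(2) by (metis Suc_lessD not_less_eq)
qed

text \<open>Strictly between the consecutive common vertices z1 and z2, the vertices of F avoid G and
  so have out-edges in F only: once T leaves z1 along F, it is forced along F up to z2.\<close>

lemma st_path_contains_segment_edge:
  fixes f :: "'v \<Rightarrow> 'a :: linorder"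
  assumes F: "is_st_path E s t F" and G: "is_st_path E s t G"
    and T: "is_st_path (pedges F \<union> pedges G) s t T"
    and mono: "\<forall>(x, y) \<in> pedges F \<union> pedges G. f x < f y"
    and inj: "inj_on f (set F \<union> set G)"
    and z: "z1 \<in> set F \<inter> set G" "z2 \<in> set F \<inter> set G" "f z1 < f z2"
    and no_common_between: "\<forall>x \<in> set F \<inter> set G. \<not> (f z1 < f x \<and> f x < f z2)"
    and leave: "\<forall>w. (z1, w) \<in> pedges T \<longrightarrow> (z1, w) \<in> pedges F"
    and e: "(u, v) \<in> pedges F" "f z1 \<le> f u" "f v \<le> f z2"
  shows "(u, v) \<in> pedges T"
proof -
  have sorted: "sorted_wrt (\<lambda>x y. f x < f y) F"
    using mono by (intro sorted_wrt_if_increasing_on_pedges) auto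
  note less_iff = sorted_wrt_nth_less_iff[OF sorted] and le_iff = sorted_wrt_nth_le_iff[OF sorted]
  have F_path: "F \<noteq> []" "distinct F" "hd F = s" "last F = t"
    and T_path: "T \<noteq> []" "hd T = s" "last T = t" "pedges T \<subseteq> pedges F \<union> pedges G"
    using F G T by (auto simp: is_st_path_def)
  define l where "l = length F - 1"
  have l: "l < length F" "F ! 0 = s" "F ! l = t"
    using F_path by (auto simp: l_def hd_conv_nth last_conv_nth)
  obtain a where a: "a < length F" "F ! a = z1"
    using z(1) by (metis IntD1 in_set_conv_nth)
  obtain b where b: "b < length F" "F ! b = z2"
    using z(2) by (metis IntD1 in_set_conv_nth)
  have "a < b"
    using less_iff[OF a(1) b(1)] a b z(3) by simp
  have T_in: "set T \<subseteq> set F \<union> set G"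
  proof
    fix x assume "x \<in> set T"
    then have "x = t \<or> (\<exists>w. (x, w) \<in> pedges T)"
      using pedges_from_non_last T_path(3) by metis
    then show "x \<in> set F \<union> set G"
      using T_path(4) pedges_subset l by fastforce
  qed
  have "\<exists>x \<in> set T. f x = f z1"
  proof (rule path_attains_level)
    show "f (hd T) \<le> f z1" "f z1 \<le> f (last T)"
      using le_iff[of 0 a] le_iff[of a l] a l \<open>a < b\<close> b T_path F_path(1)
      by (auto simp: l_def)
    show "\<forall>(x, y) \<in> pedges T. f x < f z1 \<longrightarrow> f y \<le> f z1"
      using T_path(4) pedges_no_jump_over[of F f z1] pedges_no_jump_over[of G f z1] mono z(1)
      by blast
  qed (use T_path in simp)
  then have "z1 \<in> set T"
    using T_in z(1) inj by (metis inj_onD IntD1 UnI1 subsetD)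
  have not_last: "F ! n \<noteq> last T" if "n < b" for n
    using that b l F_path(2) T_path(3) by (auto simp: l_def nth_eq_iff_index_eq)
  have inner_not_G: "F ! n \<notin> set G" if "a < n" "n < b" for n
    using that no_common_between less_iff[of a n] less_iff[of n b] a b by auto
  have leave_along_F: "(F ! n, w) \<in> pedges F"
    if "a \<le> n" "n < b" "(F ! n, w) \<in> pedges T" for n w
  proof (cases "n = a")
    case False
    then show ?thesis
      using that T_path(4) inner_not_G[of n] pedges_subset by fastforce
  qed (use that leave a in simp)
  obtain k where k: "Suc k < length F" "F ! k = u" "F ! Suc k = v"
    using e(1) by (auto simp: pedges_iff_nth)
  have "a \<le> k" "k < b"
    using le_iff[of a k] le_iff[of "Suc k" b] a b k e by auto
  then have "(F ! k, F ! Suc k) \<in> pedges T"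
    using path_follows_segment[OF F_path(2) b(1), of a T] \<open>z1 \<in> set T\<close> a not_last
      leave_along_F by simp
  with k show ?thesis
    by simp
qed

definition block_start ::
  "(pid \<Rightarrow> 'v list) \<Rightarrow> (pid \<Rightarrow> 'v list) \<Rightarrow> (pid \<Rightarrow> 'v list) \<Rightarrow> pid \<times> nat \<Rightarrow> 'v \<times> pid"
  where "block_start Fo Fu L b = (case b of (P, j) \<Rightarrow> (common_vs (Fo P) (Fu P) (L P) ! j, P))"

lemma trans_path_is_st_path:
  "transient s t Fo Fu U P \<Longrightarrow> is_st_path (active_edges Fo Fu U P) s t (trans_path s t Fo Fu U P)"
  unfolding transient_def trans_path_def by (rule theI')

lemma block_edge_on_trans_path:
  assumes ufn: "update_flow_network V E s t c Fo Fu d"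
    and topo: "topo_order (pedges (Fo P) \<union> pedges (Fu P)) (set (Fo P) \<union> set (Fu P)) (L P)"
    and tr: "transient s t Fo Fu U P"
    and j: "j < num_blocks Fo Fu L P"
    and F: "F = (if block_start Fo Fu L (P, j) \<in> U then Fu P else Fo P)"
    and e: "e \<in> block_edges Fo Fu L P j" "e \<in> pedges F"
  shows "e \<in> pedges (trans_path s t Fo Fu U P)"
proof -
  define G where "G = (if block_start Fo Fu L (P, j) \<in> U then Fo P else Fu P)"
  define zs where "zs = common_vs (Fo P) (Fu P) (L P)"
  define T where "T = trans_path s t Fo Fu U P"
  have FG: "pedges F \<union> pedges G = pedges (Fo P) \<union> pedges (Fu P)"
    "set F \<union> set G = set (Fo P) \<union> set (Fu P)" "set F \<inter> set G = set (Fo P) \<inter> set (Fu P)"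
    by (auto simp: F G_def)
  have paths: "is_st_path E s t F" "is_st_path E s t G"
    using ufn by (auto simp: F G_def update_flow_network_def is_flow_def)
  have L: "distinct (L P)" "set (L P) = set F \<union> set G"
    "\<forall>(x, y) \<in> pedges F \<union> pedges G. pos (L P) x < pos (L P) y"
    using topo FG by (auto simp: topo_order_def)
  have T: "is_st_path (pedges F \<union> pedges G) s t T"
    using is_st_path_mono[OF _ trans_path_is_st_path[OF tr]] FG(1) unfolding T_def
    by (auto simp: active_edges_def)
  have zs: "zs = filter (\<lambda>v. v \<in> set (Fo P) \<and> v \<in> set (Fu P)) (L P)" "Suc j < length zs"
    using j by (auto simp: zs_def common_vs_def num_blocks_def)
  have z: "zs ! j \<in> set F \<inter> set G" "zs ! Suc j \<in> set F \<inter> set G"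
    using nth_mem[of j zs] nth_mem[of "Suc j" zs] zs FG by auto
  have leave: "\<forall>w. (zs ! j, w) \<in> pedges T \<longrightarrow> (zs ! j, w) \<in> pedges F"
    using trans_path_is_st_path[OF tr]
    by (auto simp: T_def is_st_path_def active_edges_def F block_start_def zs_def)
  obtain u v where e_uv: "e = (u, v)"
    "pos (L P) (zs ! j) \<le> pos (L P) u" "pos (L P) v \<le> pos (L P) (zs ! Suc j)"
    using e(1) by (auto simp: block_edges_def block_vertices_def zs_def Let_def)
  have "inj_on (pos (L P)) (set F \<union> set G)"
    using inj_on_pos L(2) by metis
  moreover have "pos (L P) (zs ! j) < pos (L P) (zs ! Suc j)"
    using pos_filter_consecutive(1)[OF L(1)] zs by simp
  moreover have "\<forall>x \<in> set F \<inter> set G.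
      \<not> (pos (L P) (zs ! j) < pos (L P) x \<and> pos (L P) x < pos (L P) (zs ! Suc j))"
    using pos_filter_consecutive(2)[OF L(1)] zs FG L(2) by auto
  ultimately show ?thesis
    using st_path_contains_segment_edge[OF paths T L(3) _ z _ _ leave] e e_uv
    unfolding T_def by simp
qed

lemma dependency_violates_capacity:
  assumes ufn: "update_flow_network V E s t c Fo Fu d"
    and topo: "\<forall>P. topo_order (pedges (Fo P) \<union> pedges (Fu P)) (set (Fo P) \<union> set (Fu P)) (L P)"
    and arc: "(b1, b2) \<in> dep_graph c Fo Fu d L"
    and tf: "transient_family E s t c Fo Fu d U"
    and updated: "block_start Fo Fu L b1 \<in> U"
    and not_updated: "block_start Fo Fu L b2 \<notin> U"
  shows False
proof -
  obtain I j J j' e where b: "b1 = (I, j)" "b2 = (J, j')" and IJ: "I \<noteq> J"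
    and blocks: "j < num_blocks Fo Fu L I" "j' < num_blocks Fo Fu L J"
    and e: "e \<in> block_edges Fo Fu L I j" "e \<in> pedges (Fu I)"
      "e \<in> block_edges Fo Fu L J j'" "e \<in> pedges (Fo J)"
    and over_capacity: "c e < d I + d J"
    using arc by (auto simp: dep_graph_def)
  have tr: "transient s t Fo Fu U P" for P
    using tf by (simp add: transient_family_def)
  have "e \<in> pedges (trans_path s t Fo Fu U I)"
    using block_edge_on_trans_path[OF ufn topo[rule_format] tr blocks(1)] e updated b by simp
  moreover have "e \<in> pedges (trans_path s t Fo Fu U J)"
    using block_edge_on_trans_path[OF ufn topo[rule_format] tr blocks(2)] e not_updated b by simp
  moreover have "e \<in> E"
    using ufn e(2) by (auto simp: update_flow_network_def is_flow_def is_st_path_def)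
  ultimately have "d I + d J \<le> c e"
    using tf IJ by (cases I; cases J) (auto simp: transient_family_def)
  with over_capacity show False
    by simp
qed

definition round_of :: "('v \<times> pid) set list \<Rightarrow> 'v \<times> pid \<Rightarrow> nat"
  where "round_of rs x = (THE i. i < length rs \<and> x \<in> rs ! i)"

lemma round_of_eq:
  assumes "update_sequence V rs" "i < length rs" "x \<in> rs ! i"
  shows "round_of rs x = i"
  unfolding round_of_def
proof (rule the_equality)
  fix k assume "k < length rs \<and> x \<in> rs ! k"
  then show "k = i"
    using assms by (auto simp: update_sequence_def)
qed (use assms in simp)

lemma round_of_bounds:
  assumes "update_sequence V rs" "fst x \<in> V"
  shows "round_of rs x < length rs" "x \<in> rs ! round_of rs x"
proof -
  have "x \<in> \<Union>(set rs)"
    using assms by (cases x) (simp add: update_sequence_def)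
  then obtain i where "i < length rs" "x \<in> rs ! i"
    by (metis UnionE in_set_conv_nth)
  then show "round_of rs x < length rs" "x \<in> rs ! round_of rs x"
    using round_of_eq[OF assms(1)] by simp_all
qed

lemma block_start_in_vertices:
  assumes "update_flow_network V E s t c Fo Fu d" "j < num_blocks Fo Fu L P"
  shows "fst (block_start Fo Fu L (P, j)) \<in> V"
proof -
  have "common_vs (Fo P) (Fu P) (L P) ! j \<in> set (Fo P)"
    using assms(2) nth_mem[of j "common_vs (Fo P) (Fu P) (L P)"]
    by (auto simp: num_blocks_def common_vs_def)
  with assms(1) show ?thesis
    by (auto simp: block_start_def update_flow_network_def is_flow_def)
qed

lemma round_decreases_along_dependency:
  assumes ufn: "update_flow_network V E s t c Fo Fu d"
    and topo: "\<forall>P. topo_order (pedges (Fo P) \<union> pedges (Fu P)) (set (Fo P) \<union> set (Fu P)) (L P)"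
    and feasible: "feasible_update_sequence V E s t c Fo Fu d rs"
    and arc: "(b1, b2) \<in> dep_graph c Fo Fu d L"
  shows "round_of rs (block_start Fo Fu L b2) < round_of rs (block_start Fo Fu L b1)"
proof (rule ccontr)
  define x1 x2 where "x1 = block_start Fo Fu L b1" and "x2 = block_start Fo Fu L b2"
  define i1 where "i1 = round_of rs x1"
  define U where "U = {x1} \<union> \<Union>(set (take i1 rs))"
  assume "\<not> round_of rs x2 < round_of rs x1"
  then have later: "i1 \<le> round_of rs x2"
    by (simp add: i1_def)
  have us: "update_sequence V rs"
    using feasible by (simp add: feasible_update_sequence_def)
  have "fst x1 \<in> V" "fst x2 \<in> V"
    using arc block_start_in_vertices[OF ufn] by (auto simp: x1_def x2_def dep_graph_def)
  note rounds = round_of_bounds[OF us this(1)] round_of_bounds[OF us this(2)]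
  have "transient_family E s t c Fo Fu d U"
    using feasible rounds(1,2) unfolding feasible_update_sequence_def U_def i1_def
    by (metis empty_subsetI insert_subset)
  moreover have "x1 \<noteq> x2"
    using arc by (auto simp: x1_def x2_def block_start_def dep_graph_def)
  then have "x2 \<notin> U"
    using later round_of_eq[OF us, of _ x2] by (fastforce simp: U_def in_set_conv_nth)
  ultimately show False
    using dependency_violates_capacity[OF ufn topo arc, of U] by (simp add: U_def x1_def x2_def)
qed

theorem mainTheorem4:
  fixes V :: "'v set" and E :: "('v \<times> 'v) set" and s t :: 'v
    and c :: "'v \<times> 'v \<Rightarrow> nat" and Fo Fu L :: "pid \<Rightarrow> 'v list" and d :: "pid \<Rightarrow> nat"
  assumes "update_flow_network V E s t c Fo Fu d"
    and "\<forall>P. acyclic (pedges (Fo P) \<union> pedges (Fu P))"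
    and "\<forall>P. topo_order (pedges (Fo P) \<union> pedges (Fu P)) (set (Fo P) \<union> set (Fu P)) (L P)"
    and "\<exists>x. (x, x) \<in> (dep_graph c Fo Fu d L)\<^sup>+"
  shows "\<not> (\<exists>rs. feasible_update_sequence V E s t c Fo Fu d rs)"
proof
  assume "\<exists>rs. feasible_update_sequence V E s t c Fo Fu d rs"
  then obtain rs where feasible: "feasible_update_sequence V E s t c Fo Fu d rs" ..
  have "(dep_graph c Fo Fu d L)\<inverse> \<subseteq> measure (\<lambda>b. round_of rs (block_start Fo Fu L b))"
    using round_decreases_along_dependency[OF assms(1,3) feasible] by auto
  then have "acyclic (dep_graph c Fo Fu d L)"
    by (metis wf_measure wf_subset wf_acyclic acyclic_converse)
  with assms(4) show False
    by (auto simp: acyclic_def)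
qed

end
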